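(* Let $p\ge1$ and let $\mathcal A=(A_n)_{n\ge0}$ be a sequence of positive invertible $p\times p$ matrices with $\sup_n\|A_n\|<\infty$ such that the matrix-valued weighted shift $W_{\mathcal A}$ on $\ell^2(\mathbb C^p)$ is quadratically hyponormal. If $A_n=A_{n+1}$ for some $n\ge1$, then either $A_{n-1}=A_n=A_{n+1}$ or $A_n=A_{n+1}=A_{n+2}$.
   Context: $\ell^2(\mathbb C^p)=\{(x_n)_{n\ge0}: x_n\in\mathbb C^p,\ \sum_n\|x_n\|^2<\infty\}$; the matrix-valued weighted shift is $W_{\mathcal A}(x_0,x_1,\dots)=(0,A_0x_0,A_1x_1,\dots)$. A bounded operator $T$ is hyponormal if $T^*T-TT^*\ge0$, and quadratically hyponormal if $T+\lambda T^2$ is hyponormal for every $\lambda\in\mathbb C$. *)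

theory Defs
  imports "HOL-Analysis.Analysis"
begin

text \<open>Vectors of C^p are modelled as complex^'p with 'p a finite type (p = CARD('p) >= 1),
  p x p matrices as complex^'p^'p. Elements of l2(C^p) are sequences nat => complex^'p
  with square-summable norms.\<close>

definition cinner :: "complex^'p::finite \<Rightarrow> complex^'p \<Rightarrow> complex" where
  "cinner v w = (\<Sum>i\<in>UNIV. v $ i * cnj (w $ i))"

definition cadj :: "complex^'p::finite^'p \<Rightarrow> complex^'p^'p" where
  "cadj A = (\<chi> i j. cnj (A $ j $ i))"

definition mat_positive :: "complex^'p::finite^'p \<Rightarrow> bool" where
  "mat_positive A \<longleftrightarrow> (\<forall>v. Im (cinner (A *v v) v) = 0 \<and> Re (cinner (A *v v) v) \<ge> 0)"

definition in_l2 :: "(nat \<Rightarrow> complex^'p::finite) \<Rightarrow> bool" where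
  "in_l2 x \<longleftrightarrow> summable (\<lambda>n. (norm (x n))\<^sup>2)"

definition l2_inner :: "(nat \<Rightarrow> complex^'p::finite) \<Rightarrow> (nat \<Rightarrow> complex^'p) \<Rightarrow> complex" where
  "l2_inner x y = (\<Sum>n. cinner (x n) (y n))"

definition wshift :: "(nat \<Rightarrow> complex^'p::finite^'p) \<Rightarrow> (nat \<Rightarrow> complex^'p) \<Rightarrow> (nat \<Rightarrow> complex^'p)" where
  "wshift A x = (\<lambda>n. if n = 0 then 0 else A (n - 1) *v x (n - 1))"

definition wshift_adj :: "(nat \<Rightarrow> complex^'p::finite^'p) \<Rightarrow> (nat \<Rightarrow> complex^'p) \<Rightarrow> (nat \<Rightarrow> complex^'p)" where
  "wshift_adj A x = (\<lambda>n. cadj (A n) *v x (Suc n))"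

definition hyponormal ::
  "((nat \<Rightarrow> complex^'p::finite) \<Rightarrow> (nat \<Rightarrow> complex^'p)) \<Rightarrow> ((nat \<Rightarrow> complex^'p) \<Rightarrow> (nat \<Rightarrow> complex^'p)) \<Rightarrow> bool" where
  "hyponormal T Tadj \<longleftrightarrow>
     (\<forall>x. in_l2 x \<longrightarrow>
        (let q = l2_inner (\<lambda>n. Tadj (T x) n - T (Tadj x) n) x in Im q = 0 \<and> Re q \<ge> 0))"

text \<open>Quadratic hyponormality: T + c T^2 hyponormal for all complex c; the adjoint of
  T + c T^2 is T* + cnj c (T*)^2.\<close>
definition quad_hyponormal ::
  "((nat \<Rightarrow> complex^'p::finite) \<Rightarrow> (nat \<Rightarrow> complex^'p)) \<Rightarrow> ((nat \<Rightarrow> complex^'p) \<Rightarrow> (nat \<Rightarrow> complex^'p)) \<Rightarrow> bool" where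
  "quad_hyponormal T Tadj \<longleftrightarrow>
     (\<forall>c::complex. hyponormal (\<lambda>x n. T x n + c *s T (T x) n)
                             (\<lambda>x n. Tadj x n + cnj c *s Tadj (Tadj x) n))"

end

theory Submission
  imports Defs
begin

(*
  Let n = m + 1 and write B = A_n = A_(n+1) and E = A_(n+2). Test the hyponormality of
  W + s W^2 (s > 0) against the finitely supported vector whose entries at positions
  m, ..., m + 4 are  s^2 A_m^-1 B^3 w,  -s B w,  w,  -s B w,  s^2 E B w.
  The terms of order s^2 cancel and what remains is s^4 |B^3 w - E^2 B w|^2 <= O(s^6);
  letting s tend to 0 gives B^3 = E^2 B, hence E^2 = B^2 because B is invertible, and
  E = B by uniqueness of positive square roots. So the second alternative always holds.
*)

lemma nonpos_if_le_mult_all_pos: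
  fixes x c :: real
  assumes "\<And>t. 0 < t \<Longrightarrow> x \<le> t * c"
  shows "x \<le> 0"
proof (rule field_le_epsilon)
  fix e :: real assume "0 < e"
  then have "x \<le> e / (\<bar>c\<bar> + 1) * c" by (intro assms) simp
  also have "\<dots> \<le> e / (\<bar>c\<bar> + 1) * (\<bar>c\<bar> + 1)"
    using \<open>0 < e\<close> by (intro mult_left_mono) auto
  also have "\<dots> = e" by simp
  finally show "x \<le> 0 + e" by simp
qed

lemma matrix_vector_mult_scaleR_right:
  fixes M :: "'a::real_algebra_1^'n^'m"
  shows "M *v (r *\<^sub>R u) = r *\<^sub>R (M *v u)"
  by (simp add: vec_eq_iff matrix_vector_mult_def scaleR_sum_right)

lemma matrix_vector_mult_axis_component:
  fixes M :: "'a::semiring_1^'n^'m"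
  shows "(M *v axis j 1) $ i = M $ i $ j"
proof -
  have "(\<Sum>k\<in>UNIV. M $ i $ k * axis j 1 $ k) = (\<Sum>k\<in>UNIV. if k = j then M $ i $ k else 0)"
    by (rule sum.cong) (auto simp: axis_def)
  then show ?thesis unfolding matrix_vector_mult_def by simp
qed

lemma of_real_scale_eq_scaleR: "complex_of_real r *s (u::complex^'n) = r *\<^sub>R u"
  by (simp add: vec_eq_iff scaleR_conv_of_real[where 'a = complex])

section \<open>The standard sesquilinear form on C^p\<close>

lemma cinner_commute: "cinner b a = cnj (cinner a b)"
  unfolding cinner_def by (simp add: mult.commute)

lemma cinner_add_left: "cinner (a + b) c = cinner a c + cinner b c"
  unfolding cinner_def by (simp add: distrib_right sum.distrib)

lemma cinner_add_right: "cinner a (b + c) = cinner a b + cinner a c"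
  unfolding cinner_def by (simp add: distrib_left sum.distrib)

lemma cinner_diff_left: "cinner (a - b) c = cinner a c - cinner b c"
  unfolding cinner_def by (simp add: left_diff_distrib sum_subtractf)

lemma cinner_scale_left: "cinner (k *s a) c = k * cinner a c"
  unfolding cinner_def by (simp add: sum_distrib_left mult.assoc)

lemma cinner_scale_right: "cinner a (k *s c) = cnj k * cinner a c"
  unfolding cinner_def by (simp add: sum_distrib_left algebra_simps)

lemma cinner_zero_right [simp]: "cinner c 0 = 0"
  unfolding cinner_def by simp

lemma cinner_zero_left [simp]: "cinner 0 c = 0"
  unfolding cinner_def by simp

lemma Re_cinner: "Re (cinner a b) = inner a b"
  unfolding cinner_def inner_vec_def by (simp add: Re_sum inner_complex_def)

lemma cinner_cadj_left: "cinner (cadj M *v a) b = cinner a (M *v b)"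
proof -
  have "cinner (cadj M *v a) b = (\<Sum>i\<in>UNIV. \<Sum>j\<in>UNIV. cnj (M$j$i) * a$j * cnj (b$i))"
    unfolding cinner_def cadj_def matrix_vector_mult_def by (simp add: sum_distrib_right)
  also have "\<dots> = (\<Sum>j\<in>UNIV. \<Sum>i\<in>UNIV. cnj (M$j$i) * a$j * cnj (b$i))"
    by (rule sum.swap)
  also have "\<dots> = cinner a (M *v b)"
    unfolding cinner_def matrix_vector_mult_def by (simp add: sum_distrib_left algebra_simps)
  finally show ?thesis .
qed

lemma cadj_diff: "cadj (X - Y) = cadj X - cadj Y"
  by (simp add: cadj_def vec_eq_iff)

lemma cinner_self_eq_0_iff: "cinner a a = 0 \<longleftrightarrow> a = 0"
proof
  assume "cinner a a = 0"
  then have "inner a a = 0" by (metis Re_cinner zero_complex.sel(1))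
  then show "a = 0" by simp
qed simp

lemma quadratic_form_eq_0_imp_matrix_eq_0:
  fixes D :: "complex^'p::finite^'p"
  assumes zero: "\<And>v. cinner (D *v v) v = 0"
  shows "D = 0"
proof -
  have expand: "cinner (D *v (a + k *s b)) (a + k *s b)
      = cnj k * cinner (D *v a) b + k * cinner (D *v b) a" for a b k
    using zero[of a] zero[of b]
    by (simp add: matrix_vector_right_distrib vec.scale cinner_add_left cinner_add_right
        cinner_scale_left cinner_scale_right algebra_simps)
  have "cinner (D *v a) b = 0" for a b
  proof -
    have "cinner (D *v a) b + cinner (D *v b) a = 0"
      using expand[of a 1 b] zero by simp
    moreover have "- \<i> * cinner (D *v a) b + \<i> * cinner (D *v b) a = 0"
      using expand[of a \<i> b] zero by simp
    ultimately show ?thesis by (simp add: add_eq_0_iff algebra_simps)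
  qed
  then have "D *v a = 0" for a
    using cinner_self_eq_0_iff by blast
  then show ?thesis by (simp add: matrix_eq)
qed

section \<open>Positive matrices\<close>

lemma mat_positive_cadj_eq:
  assumes "mat_positive A"
  shows "cadj A = A"
proof -
  have "cinner ((A - cadj A) *v v) v = 0" for v
  proof -
    have "Im (cinner (A *v v) v) = 0" using assms unfolding mat_positive_def by blast
    then have "cinner (A *v v) v = cnj (cinner (A *v v) v)" by (simp add: complex_eq_iff)
    then show ?thesis
      by (simp add: matrix_vector_mult_diff_rdistrib cinner_diff_left cinner_cadj_left
          cinner_commute[of "A *v v"])
  qed
  then show ?thesis using quadratic_form_eq_0_imp_matrix_eq_0 by fastforce
qed

lemma inner_matrix_vector_mult_hermitian:
  assumes "cadj M = M"
  shows "inner (M *v a) b = inner a (M *v b)"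
  using cinner_cadj_left[of M a b] assms by (metis Re_cinner)

lemma mat_positive_inner_nonneg: "mat_positive E \<Longrightarrow> 0 \<le> inner (E *v u) u"
  unfolding mat_positive_def by (metis Re_cinner)

lemma mat_positive_inner_eq_0_imp_mult_eq_0:
  assumes pos: "mat_positive E" and zero: "inner (E *v u) u = 0"
  shows "E *v u = 0"
proof -
  define h where "h = E *v u"
  have herm: "cadj E = E" using pos by (rule mat_positive_cadj_eq)
  have "inner h h \<le> t * (inner (E *v h) h / 2)" if "0 < t" for t
  proof -
    have "0 \<le> inner (E *v (u - t *\<^sub>R h)) (u - t *\<^sub>R h)"
      using pos by (rule mat_positive_inner_nonneg)
    also have "\<dots> = - 2 * t * inner h h + t\<^sup>2 * inner (E *v h) h"
      using zero inner_matrix_vector_mult_hermitian[OF herm, of h u]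
      by (simp add: h_def matrix_vector_mult_diff_distrib matrix_vector_mult_scaleR_right
          inner_diff_left inner_diff_right inner_commute[of u] power2_eq_square algebra_simps)
    finally show ?thesis using that by (simp add: power2_eq_square field_simps)
  qed
  then have "inner h h \<le> 0" by (rule nonpos_if_le_mult_all_pos)
  then show ?thesis unfolding h_def by (metis inner_eq_zero_iff inner_ge_zero order_antisym)
qed

lemma Re_trace_eq_sum_inner_axis:
  fixes Z :: "complex^'p::finite^'p"
  shows "Re (trace Z) = (\<Sum>i\<in>UNIV. inner (Z *v axis i 1) (axis i 1))"
  by (simp add: trace_def inner_commute[of "Z *v _"] inner_axis' matrix_vector_mult_axis_component
      inner_complex_def)

lemma mat_positive_square_eq_imp_eq:
  fixes E B :: "complex^'p::finite^'p"
  assumes pE: "mat_positive E" and pB: "mat_positive B" and inv: "invertible E"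
    and sq: "E ** E = B ** B"
  shows "E = B"
proof -
  define M where "M = E - B"
  have hM: "cadj M = M"
    unfolding M_def cadj_diff using pE pB by (simp add: mat_positive_cadj_eq)
  have anticomm: "E ** M + M ** B = 0"
  proof -
    have "E *v (E *v u) = B *v (B *v u)" for u
      by (simp add: matrix_vector_mul_assoc sq)
    then have "(E ** M + M ** B) *v u = 0" for u
      by (simp add: M_def matrix_vector_mult_add_rdistrib matrix_vector_mult_diff_rdistrib
          matrix_vector_mult_diff_distrib flip: matrix_vector_mul_assoc)
    then show ?thesis by (simp add: matrix_eq)
  qed
  \<comment> \<open>\<open>E M + M B = 0\<close> makes \<open>tr (M E M) = - tr (M B M)\<close>; both traces are nonnegative.\<close>
  define Q where "Q X = (\<Sum>i\<in>UNIV. inner (X *v (M *v axis i 1)) (M *v axis i 1))" for X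
  have Q_nonneg: "mat_positive X \<Longrightarrow> 0 \<le> Q X" for X
    unfolding Q_def by (intro sum_nonneg mat_positive_inner_nonneg)
  have Q_trace: "Q X = Re (trace (M ** (X ** M)))" for X
  proof -
    have "inner (X *v (M *v u)) (M *v u) = inner ((M ** (X ** M)) *v u) u" for u
      by (simp add: inner_matrix_vector_mult_hermitian[OF hM, symmetric] matrix_vector_mul_assoc)
    then show ?thesis unfolding Q_def Re_trace_eq_sum_inner_axis by simp
  qed
  have "Q E + Q B = 0"
  proof -
    have "trace (M ** (B ** M)) = trace (M ** (M ** B))"
      by (metis matrix_mul_assoc trace_mul_sym)
    then have "Q E + Q B = Re (trace (M ** (E ** M + M ** B)))"
      by (simp add: Q_trace matrix_add_ldistrib trace_add)
    then show ?thesis by (simp add: anticomm trace_0[simplified])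
  qed
  then have "Q E = 0"
    using Q_nonneg[OF pE] Q_nonneg[OF pB] by linarith
  then have "inner (E *v (M *v axis i 1)) (M *v axis i 1) = 0" for i
    using sum_nonneg_eq_0_iff[of UNIV "\<lambda>i. inner (E *v (M *v axis i 1)) (M *v axis i 1)"]
      mat_positive_inner_nonneg[OF pE] unfolding Q_def by auto
  then have "E *v (M *v axis i 1) = 0" for i
    using pE mat_positive_inner_eq_0_imp_mult_eq_0 by blast
  moreover obtain Einv where "Einv ** E = mat 1"
    using inv invertible_left_inverse by blast
  ultimately have "M *v axis i 1 = 0" for i
    by (metis matrix_vector_mul_assoc matrix_vector_mul_lid matrix_vector_mult_0_right)
  then have "M = 0"
    by (metis matrix_vector_mult_axis_component vec_eq_iff zero_index)
  then show ?thesis unfolding M_def by simp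
qed

section \<open>Finitely supported sequences\<close>

definition finite_support :: "(nat \<Rightarrow> 'a::zero) \<Rightarrow> bool" where
  "finite_support x \<longleftrightarrow> (\<forall>\<^sub>F k in sequentially. x k = 0)"

lemma finite_support_iff: "finite_support x \<longleftrightarrow> (\<exists>N. \<forall>k\<ge>N. x k = 0)"
  unfolding finite_support_def eventually_sequentially ..

lemma finite_support_wshift:
  assumes "finite_support x"
  shows "finite_support (wshift A x)"
proof -
  obtain N where "\<forall>k\<ge>N. x k = 0"
    using assms unfolding finite_support_iff by blast
  then have "\<forall>k\<ge>Suc N. wshift A x k = 0"
    unfolding wshift_def by auto
  then show ?thesis unfolding finite_support_iff by blast
qed

lemma finite_support_wshift_adj:
  assumes "finite_support x"
  shows "finite_support (wshift_adj A x)"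
proof -
  obtain N where "\<forall>k\<ge>N. x k = 0"
    using assms unfolding finite_support_iff by blast
  then have "\<forall>k\<ge>N. wshift_adj A x k = 0"
    unfolding wshift_adj_def by simp
  then show ?thesis unfolding finite_support_iff by blast
qed

lemma finite_support_add_scale:
  fixes u v :: "nat \<Rightarrow> 'a::semiring_0^'n"
  assumes "finite_support u" "finite_support v"
  shows "finite_support (\<lambda>k. u k + c *s v k)"
  using eventually_conj[OF assms[unfolded finite_support_def]] unfolding finite_support_def
  by (rule eventually_mono) simp

lemma finite_support_in_l2:
  assumes "finite_support x"
  shows "in_l2 x"
proof -
  obtain N where "\<forall>k\<ge>N. x k = 0"
    using assms unfolding finite_support_iff by blast
  then show ?thesis
    unfolding in_l2_def by (intro summable_finite[of "{..<N}"]) (auto simp: not_less)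
qed

lemma l2_inner_eq_sum:
  assumes "\<forall>k\<ge>N. cinner (u k) (x k) = 0"
  shows "l2_inner u x = (\<Sum>k<N. cinner (u k) (x k))"
  unfolding l2_inner_def using assms by (intro suminf_finite) (auto simp: not_less)

lemma l2_inner_eq_sum_right:
  "\<forall>k\<ge>N. x k = 0 \<Longrightarrow> l2_inner u x = (\<Sum>k<N. cinner (u k) (x k))"
  by (rule l2_inner_eq_sum) simp

lemma l2_inner_eq_sum_left:
  "\<forall>k\<ge>N. u k = 0 \<Longrightarrow> l2_inner u x = (\<Sum>k<N. cinner (u k) (x k))"
  by (rule l2_inner_eq_sum) simp

lemma l2_inner_commute: "finite_support x \<Longrightarrow> l2_inner u x = cnj (l2_inner x u)"
  unfolding finite_support_iff
  by (auto simp: l2_inner_eq_sum_right l2_inner_eq_sum_left cinner_commute[of "x _"])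

lemma l2_inner_diff_left:
  "finite_support x \<Longrightarrow> l2_inner (\<lambda>k. u k - v k) x = l2_inner u x - l2_inner v x"
  unfolding finite_support_iff
  by (auto simp: l2_inner_eq_sum_right cinner_diff_left sum_subtractf)

lemma l2_inner_add_scale_left:
  "finite_support x \<Longrightarrow> l2_inner (\<lambda>k. u k + c *s v k) x = l2_inner u x + c * l2_inner v x"
  unfolding finite_support_iff
  by (auto simp: l2_inner_eq_sum_right cinner_add_left cinner_scale_left sum.distrib
      sum_distrib_left)

lemma l2_inner_add_scale_right:
  assumes "finite_support u" "finite_support v"
  shows "l2_inner y (\<lambda>k. u k + c *s v k) = l2_inner y u + cnj c * l2_inner y v"
proof -
  obtain N where u: "\<forall>k\<ge>N. u k = 0" and v: "\<forall>k\<ge>N. v k = 0"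
    using assms unfolding finite_support_iff by (meson le_trans nat_le_linear)
  then have "\<forall>k\<ge>N. u k + c *s v k = 0"
    by simp
  then have "l2_inner y (\<lambda>k. u k + c *s v k) = (\<Sum>k<N. cinner (y k) (u k + c *s v k))"
    by (rule l2_inner_eq_sum_right)
  then show ?thesis
    using u v
    by (simp add: l2_inner_eq_sum_right cinner_add_right cinner_scale_right sum.distrib
        sum_distrib_left)
qed

lemma l2_inner_self:
  assumes "finite_support u"
  shows "Re (l2_inner u u) = (\<Sum>k. (norm (u k))\<^sup>2)"
proof -
  obtain N where N: "\<forall>k\<ge>N. u k = 0"
    using assms unfolding finite_support_iff by blast
  then have "(\<Sum>k. (norm (u k))\<^sup>2) = (\<Sum>k<N. (norm (u k))\<^sup>2)"
    by (intro suminf_finite) (auto simp: not_less)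
  then show ?thesis
    using N by (simp add: l2_inner_eq_sum_right Re_cinner power2_norm_eq_inner)
qed

lemma l2_inner_wshift_adj:
  assumes "finite_support x"
  shows "l2_inner (wshift_adj A y) x = l2_inner y (wshift A x)"
proof -
  obtain N where N: "\<forall>k\<ge>N. x k = 0"
    using assms unfolding finite_support_iff by blast
  then have "\<forall>k\<ge>Suc N. wshift A x k = 0"
    unfolding wshift_def by auto
  then have "l2_inner y (wshift A x) = (\<Sum>k<Suc N. cinner (y k) (wshift A x k))"
    by (rule l2_inner_eq_sum_right)
  also have "\<dots> = (\<Sum>k<N. cinner (y (Suc k)) (A k *v x k))"
    by (subst sum.lessThan_Suc_shift) (simp add: wshift_def)
  also have "\<dots> = l2_inner (wshift_adj A y) x"
    using N by (simp add: l2_inner_eq_sum_right wshift_adj_def cinner_cadj_left)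
  finally show ?thesis ..
qed

lemma hyponormal_imp_norm_adj_le:
  assumes hyp: "hyponormal T Tadj"
    and adj: "\<And>x y. finite_support x \<Longrightarrow> l2_inner (Tadj y) x = l2_inner y (T x)"
    and T: "\<And>x. finite_support x \<Longrightarrow> finite_support (T x)"
    and Tadj: "\<And>x. finite_support x \<Longrightarrow> finite_support (Tadj x)"
    and x: "finite_support x"
  shows "(\<Sum>k. (norm (Tadj x k))\<^sup>2) \<le> (\<Sum>k. (norm (T x k))\<^sup>2)"
proof -
  have "l2_inner (T (Tadj x)) x = cnj (l2_inner (Tadj x) (Tadj x))"
    using l2_inner_commute[OF x] adj[OF Tadj[OF x], of x] by simp
  then have "l2_inner (\<lambda>n. Tadj (T x) n - T (Tadj x) n) x
      = l2_inner (T x) (T x) - cnj (l2_inner (Tadj x) (Tadj x))"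
    using x by (simp add: l2_inner_diff_left adj)
  moreover have "0 \<le> Re (l2_inner (\<lambda>n. Tadj (T x) n - T (Tadj x) n) x)"
    using hyp finite_support_in_l2[OF x] unfolding hyponormal_def Let_def by blast
  ultimately show ?thesis
    using x by (simp add: l2_inner_self T Tadj)
qed

lemma quad_hyponormal_wshift_norm_le:
  assumes qh: "quad_hyponormal (wshift A) (wshift_adj A)" and x: "finite_support x"
  shows "(\<Sum>k. (norm (wshift_adj A x k + cnj c *s wshift_adj A (wshift_adj A x) k))\<^sup>2)
    \<le> (\<Sum>k. (norm (wshift A x k + c *s wshift A (wshift A x) k))\<^sup>2)"
proof (rule hyponormal_imp_norm_adj_le[OF _ _ _ _ x])
  show "hyponormal (\<lambda>x n. wshift A x n + c *s wshift A (wshift A x) n)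
      (\<lambda>x n. wshift_adj A x n + cnj c *s wshift_adj A (wshift_adj A x) n)"
    using qh unfolding quad_hyponormal_def by blast
  show "l2_inner (\<lambda>n. wshift_adj A y n + cnj c *s wshift_adj A (wshift_adj A y) n) x
      = l2_inner y (\<lambda>n. wshift A x n + c *s wshift A (wshift A x) n)"
    if "finite_support x" for x y
    using that by (simp add: l2_inner_add_scale_left l2_inner_add_scale_right l2_inner_wshift_adj
        finite_support_wshift)
qed (simp_all add: finite_support_add_scale finite_support_wshift finite_support_wshift_adj)

section \<open>Testing quadratic hyponormality at a flat pair of weights\<close>

definition flat_test_vector ::
  "(nat \<Rightarrow> complex^'p::finite^'p) \<Rightarrow> nat \<Rightarrow> real \<Rightarrow> complex^'p \<Rightarrow> complex^'p
    \<Rightarrow> nat \<Rightarrow> complex^'p"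
  where
  "flat_test_vector A m s y w k =
    (if k = m then s\<^sup>2 *\<^sub>R y
     else if k = Suc m \<or> k = m + 3 then (- s) *\<^sub>R (A (Suc m) *v w)
     else if k = m + 2 then w
     else if k = m + 4 then s\<^sup>2 *\<^sub>R (A (m + 3) *v (A (Suc m) *v w))
     else 0)"

lemma finite_support_flat_test_vector: "finite_support (flat_test_vector A m s y w)"
  unfolding finite_support_iff flat_test_vector_def by (rule exI[of _ "m + 5"]) auto

lemma norm_quad_wshift_flat_test_vector:
  fixes A :: "nat \<Rightarrow> complex^'p::finite^'p" and m :: nat and s :: real and y w :: "complex^'p"
  defines "B \<equiv> A (Suc m)" and "E \<equiv> A (m + 3)" and "x \<equiv> flat_test_vector A m s y w"
  defines "v \<equiv> B *v w"
  defines "a \<equiv> B *v (B *v v)"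
    and "g \<equiv> A (m + 5) *v (A (m + 4) *v (E *v v))"
  assumes flat: "A (Suc (Suc m)) = B" and y: "A m *v y = a"
  shows "(\<Sum>k. (norm (wshift A x k + complex_of_real s *s wshift A (wshift A x) k))\<^sup>2)
    = (norm (s\<^sup>2 *\<^sub>R a))\<^sup>2 + (norm ((- s) *\<^sub>R (B *v v) + s ^ 3 *\<^sub>R (B *v a)))\<^sup>2
      + (norm (v - s\<^sup>2 *\<^sub>R a))\<^sup>2 + (norm (s ^ 3 *\<^sub>R g))\<^sup>2"
proof -
  have E_eq: "A (Suc (Suc (Suc m))) = E" by (simp add: E_def numeral_3_eq_3)
  note simps = matrix_vector_mult_scaleR_right vec.neg flat B_def[symmetric] E_eq eval_nat_numeral
  have Wx: "wshift A x k =
      (if k = Suc m then s\<^sup>2 *\<^sub>R a else if k = m + 2 then (- s) *\<^sub>R (B *v v)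
       else if k = m + 3 then v else if k = m + 4 then (- s) *\<^sub>R (E *v v)
       else if k = m + 5 then s\<^sup>2 *\<^sub>R (A (m + 4) *v (E *v v)) else 0)" for k
    unfolding wshift_def x_def flat_test_vector_def using y
    by (auto simp: simps v_def)
  have WWx: "wshift A (wshift A x) k =
      (if k = m + 2 then s\<^sup>2 *\<^sub>R (B *v a) else if k = m + 3 then (- s) *\<^sub>R a
       else if k = m + 4 then E *v v else if k = m + 5 then (- s) *\<^sub>R (A (m + 4) *v (E *v v))
       else if k = m + 6 then s\<^sup>2 *\<^sub>R g else 0)" for k
    unfolding wshift_def[of A "wshift A x"] Wx
    by (auto simp: simps a_def g_def)
  have T: "wshift A x k + complex_of_real s *s wshift A (wshift A x) k =
      (if k = Suc m then s\<^sup>2 *\<^sub>R a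
       else if k = m + 2 then (- s) *\<^sub>R (B *v v) + s ^ 3 *\<^sub>R (B *v a)
       else if k = m + 3 then v - s\<^sup>2 *\<^sub>R a else if k = m + 6 then s ^ 3 *\<^sub>R g else 0)" for k
    unfolding of_real_scale_eq_scaleR Wx WWx
    by (auto simp: power2_eq_square power3_eq_cube algebra_simps)
  show ?thesis
    by (subst suminf_finite[of "{Suc m, m + 2, m + 3, m + 6}"]) (auto simp: T)
qed

lemma norm_quad_wshift_adj_flat_test_vector_ge:
  fixes A :: "nat \<Rightarrow> complex^'p::finite^'p" and m :: nat and s :: real and y w :: "complex^'p"
  defines "B \<equiv> A (Suc m)" and "E \<equiv> A (m + 3)" and "x \<equiv> flat_test_vector A m s y w"
  defines "v \<equiv> B *v w"
  defines "a \<equiv> B *v (B *v v)" and "p \<equiv> E *v (E *v v)"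
  assumes herm: "\<forall>k. cadj (A k) = A k" and flat: "A (Suc (Suc m)) = B"
  shows "(norm (v - s\<^sup>2 *\<^sub>R a))\<^sup>2 + (norm ((- s) *\<^sub>R (B *v v) + s ^ 3 *\<^sub>R (B *v p)))\<^sup>2
      + (norm (s\<^sup>2 *\<^sub>R p))\<^sup>2
    \<le> (\<Sum>k. (norm (wshift_adj A x k
            + cnj (complex_of_real s) *s wshift_adj A (wshift_adj A x) k))\<^sup>2)"
proof -
  have E_eq: "A (Suc (Suc (Suc m))) = E" by (simp add: E_def numeral_3_eq_3)
  have hB: "cadj B = B" and hE: "cadj E = E" using herm B_def E_def by simp_all
  note simps = matrix_vector_mult_scaleR_right vec.neg flat herm hB hE B_def[symmetric] E_eq
    eval_nat_numeral
  have W1: "wshift_adj A x (Suc m) = v" and W2: "wshift_adj A x (m + 2) = (- s) *\<^sub>R (B *v v)"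
    and W3: "wshift_adj A x (m + 3) = s\<^sup>2 *\<^sub>R p" and W4: "wshift_adj A x (m + 4) = 0"
    unfolding wshift_adj_def x_def flat_test_vector_def
    by (auto simp: simps v_def p_def)
  have "wshift_adj A (wshift_adj A x) (Suc m) = (- s) *\<^sub>R a"
    and "wshift_adj A (wshift_adj A x) (m + 2) = s\<^sup>2 *\<^sub>R (B *v p)"
    and "wshift_adj A (wshift_adj A x) (m + 3) = 0"
    unfolding wshift_adj_def[of A "wshift_adj A x"] using W2 W3 W4
    by (auto simp: simps a_def)
  then have T: "wshift_adj A x k + cnj (complex_of_real s) *s wshift_adj A (wshift_adj A x) k
      = (if k = Suc m then v - s\<^sup>2 *\<^sub>R a
         else if k = m + 2 then (- s) *\<^sub>R (B *v v) + s ^ 3 *\<^sub>R (B *v p)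
         else s\<^sup>2 *\<^sub>R p)"
    if "k \<in> {Suc m, m + 2, m + 3}" for k
    using that W1 W2 W3 by (auto simp: of_real_scale_eq_scaleR power2_eq_square power3_eq_cube)
  have "finite_support (\<lambda>k. wshift_adj A x k
      + cnj (complex_of_real s) *s wshift_adj A (wshift_adj A x) k)"
    unfolding x_def
    by (intro finite_support_add_scale finite_support_wshift_adj finite_support_flat_test_vector)
  then have "summable (\<lambda>k. (norm (wshift_adj A x k
      + cnj (complex_of_real s) *s wshift_adj A (wshift_adj A x) k))\<^sup>2)"
    using finite_support_in_l2 unfolding in_l2_def by blast
  from sum_le_suminf[OF this, of "{Suc m, m + 2, m + 3}"] show ?thesis
    using T[of "Suc m"] T[of "m + 2"] T[of "m + 3"] by simp
qed

lemma quad_hyponormal_wshift_flat_estimate: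
  fixes A :: "nat \<Rightarrow> complex^'p::finite^'p" and m :: nat and s :: real and w :: "complex^'p"
  defines "B \<equiv> A (Suc m)" and "E \<equiv> A (m + 3)"
  defines "v \<equiv> B *v w"
  defines "a \<equiv> B *v (B *v v)" and "p \<equiv> E *v (E *v v)"
    and "g \<equiv> A (m + 5) *v (A (m + 4) *v (E *v v))"
  assumes herm: "\<forall>k. cadj (A k) = A k" and inv: "invertible (A m)"
    and flat: "A (Suc (Suc m)) = B" and qh: "quad_hyponormal (wshift A) (wshift_adj A)"
    and s: "0 < s"
  shows "(norm (a - p))\<^sup>2 \<le> s\<^sup>2 * ((norm (B *v a))\<^sup>2 + (norm g)\<^sup>2)"
proof -
  obtain y where y: "A m *v y = a"
    using inv invertible_right_inverse by (metis matrix_vector_mul_assoc matrix_vector_mul_lid)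
  have test: "(norm ((- s) *\<^sub>R (B *v v) + s ^ 3 *\<^sub>R (B *v p)))\<^sup>2 + (norm (s\<^sup>2 *\<^sub>R p))\<^sup>2
      \<le> (norm (s\<^sup>2 *\<^sub>R a))\<^sup>2 + (norm ((- s) *\<^sub>R (B *v v) + s ^ 3 *\<^sub>R (B *v a)))\<^sup>2
        + (norm (s ^ 3 *\<^sub>R g))\<^sup>2"
    using norm_quad_wshift_adj_flat_test_vector_ge[OF herm flat[unfolded B_def],
        where s = s and y = y and w = w]
      norm_quad_wshift_flat_test_vector[OF flat[unfolded B_def] y[unfolded a_def v_def B_def],
        where s = s]
      quad_hyponormal_wshift_norm_le[OF qh finite_support_flat_test_vector[of A m s y w],
        where c = "complex_of_real s"]
    unfolding B_def E_def v_def a_def p_def g_def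
    by simp
  have "cadj B = B"
    using herm B_def by simp
  then have ip: "inner (B *v v) (B *v a) = (norm a)\<^sup>2" "inner (B *v v) (B *v p) = inner a p"
    by (simp_all add: a_def inner_matrix_vector_mult_hermitian power2_norm_eq_inner)
  have expand: "(norm ((- s) *\<^sub>R u + s ^ 3 *\<^sub>R z))\<^sup>2
      = s\<^sup>2 * (norm u)\<^sup>2 - 2 * (s ^ 4 * inner u z) + s ^ 6 * (norm z)\<^sup>2" for u z :: "complex^'p"
    unfolding power2_norm_eq_inner
    by (simp add: inner_add_left inner_add_right inner_commute[of z u] algebra_simps
        power2_eq_square power3_eq_cube numeral_eq_Suc)
  have scale: "(norm (s\<^sup>2 *\<^sub>R u))\<^sup>2 = s ^ 4 * (norm u)\<^sup>2"
    "(norm (s ^ 3 *\<^sub>R u))\<^sup>2 = s ^ 6 * (norm u)\<^sup>2" for u :: "complex^'p"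
    by (simp_all add: power_mult_distrib flip: power_mult)
  have diff: "s ^ 4 * (norm (a - p))\<^sup>2
      = s ^ 4 * (norm a)\<^sup>2 - 2 * (s ^ 4 * inner a p) + s ^ 4 * (norm p)\<^sup>2"
    by (simp add: power2_norm_eq_inner inner_diff_left inner_diff_right inner_commute[of p a]
        algebra_simps)
  have "0 \<le> s ^ 6 * (norm (B *v p))\<^sup>2"
    by simp
  then have "s ^ 4 * (norm (a - p))\<^sup>2 \<le> s ^ 6 * (norm (B *v a))\<^sup>2 + s ^ 6 * (norm g)\<^sup>2"
    using test diff unfolding expand scale ip by linarith
  also have "\<dots> = s ^ 4 * (s\<^sup>2 * ((norm (B *v a))\<^sup>2 + (norm g)\<^sup>2))"
    by (simp add: algebra_simps flip: power_add)
  finally show ?thesis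
    by (rule mult_left_le_imp_le) (use s in simp)
qed

lemma quad_hyponormal_wshift_flat_square:
  fixes A :: "nat \<Rightarrow> complex^'p::finite^'p"
  assumes herm: "\<forall>k. cadj (A k) = A k" and inv: "invertible (A m)" "invertible (A (Suc m))"
    and flat: "A (Suc (Suc m)) = A (Suc m)" and qh: "quad_hyponormal (wshift A) (wshift_adj A)"
  shows "A (m + 3) ** A (m + 3) = A (Suc m) ** A (Suc m)"
proof -
  let ?B = "A (Suc m)" and ?E = "A (m + 3)"
  have "?B *v (?B *v (?B *v w)) = ?E *v (?E *v (?B *v w))" for w
  proof -
    let ?d = "?B *v (?B *v (?B *v w)) - ?E *v (?E *v (?B *v w))"
    let ?L = "(norm (?B *v (?B *v (?B *v (?B *v w)))))\<^sup>2
      + (norm (A (m + 5) *v (A (m + 4) *v (?E *v (?B *v w)))))\<^sup>2"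
    have "(norm ?d)\<^sup>2 \<le> t * ?L" if "0 < t" for t
      using quad_hyponormal_wshift_flat_estimate[OF herm inv(1) flat qh, of "sqrt t" w] that
      by simp
    then have "(norm ?d)\<^sup>2 \<le> 0"
      by (rule nonpos_if_le_mult_all_pos)
    then show ?thesis by simp
  qed
  moreover obtain Binv where "?B ** Binv = mat 1"
    using inv(2) invertible_right_inverse by blast
  ultimately have "?E *v (?E *v u) = ?B *v (?B *v u)" for u
    by (metis matrix_vector_mul_assoc matrix_vector_mul_lid)
  then show ?thesis
    by (simp add: matrix_eq flip: matrix_vector_mul_assoc)
qed

theorem mainTheorem5:
  fixes A :: "nat \<Rightarrow> complex^'p::finite^'p" and n :: nat
  assumes pos: "\<forall>k. mat_positive (A k) \<and> invertible (A k)"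
    and bdd: "\<exists>M. \<forall>k. onorm (\<lambda>v. A k *v v) \<le> M"
    and qh: "quad_hyponormal (wshift A) (wshift_adj A)"
    and n1: "n \<ge> 1"
    and eq: "A n = A (Suc n)"
  shows "(A (n - 1) = A n \<and> A n = A (Suc n)) \<or> (A n = A (Suc n) \<and> A (Suc n) = A (Suc (Suc n)))"
proof -
  obtain m where n: "n = Suc m"
    using n1 by (cases n) auto
  have herm: "\<forall>k. cadj (A k) = A k"
    using pos mat_positive_cadj_eq by blast
  have "A (m + 3) ** A (m + 3) = A (Suc m) ** A (Suc m)"
    using quad_hyponormal_wshift_flat_square[OF herm _ _ _ qh] pos eq n by simp
  then have "A (m + 3) = A (Suc m)"
    using mat_positive_square_eq_imp_eq pos by blast
  then show ?thesis
    using eq n by (simp add: numeral_3_eq_3)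
qed

end
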